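(* Let $L$ be a multisorted algebra in the positive existential signature satisfying axioms (1), (2), (3), (4), (8). Let $r\neq s$ be two elements of the same sort of $L$. Then there is a set $W$ and an almost morphism $\varphi\colon L\to A(W)$ into the positive existential algebra of $W$ such that $\varphi(r)\neq\varphi(s)$.
   Context: The Boolean prime ideal theorem is assumed. Signature. There is a sort $n$ for each $n\ge0$. For every function $\alpha\colon\{1,\dots,n\}\to\{1,\dots,k\}$ there is a unary function symbol ("substitution") $\alpha\colon n\to k$ (argument of sort $n$, value of sort $k$). Each sort has $0,1,\vee,\wedge$; for each $n$ there is $\exists\colon n+1\to n$ (positive existential signature). For $\alpha\colon k\to n$, $\beta\colon n\to m$, $\beta\circ\alpha$ is the substitution symbol of the composite function; $\mathrm{id}$ is the identity substitution. The associated cylindrification of $\exists\colon n+1\to n$ is $c\colon n\to n+1$, $c(i)=i$. For a set $W$: $\alpha^{\mathrm{tuple}}(x_1,\dots,x_k)=(x_{\alpha(1)},\dots,x_{\alpha(n)})$, $\alpha^{\mathrm{relation}}(r)=\{\bar x\in W^k:\alpha^{\mathrm{tuple}}(\bar x)\in r\}$. The positive existential algebra $A(W)$ interprets sort $n$ as $\mathcal P(W^n)$, $\alpha$ as $\alpha^{\mathrm{relation}}$, $0,1,\vee,\wedge$ as $\emptyset,W^n,\cup,\cap$, and $\exists(r)=\{\bar x:\exists y\,(\bar x,y)\in r\}$. An almost morphism $\varphi\colon L\to A(W)$ is a sort-preserving family of maps commuting with all substitutions and with $0,1,\vee,\wedge$, and satisfying $\exists(\varphi(r))\subseteq\varphi(\exists(r))$.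 Axioms: (1) each sort is a bounded distributive lattice; (2) substitutions preserve $0,1,\vee,\wedge$; (3) $(\beta\circ\alpha)(r)=\beta(\alpha(r))$; (4) $\mathrm{id}(r)=r$; (8) $r\le c(\exists(r))$ (where $x\le y$ means $x=x\wedge y$). *)

theory Defs
  imports "HOL-Library.FuncSet"
begin

text \<open>Index sets {1..n} of the paper are represented as {0..<n}; a substitution
  symbol alpha : n -> k is an extensional function from {0..<n} to {0..<k}.
  ex L n : sort (n+1) -> sort n;  sb L n k alpha : sort n -> sort k.\<close>

record 'a pe_alg =
  car  :: "nat \<Rightarrow> 'a set"
  bot  :: "nat \<Rightarrow> 'a"
  top  :: "nat \<Rightarrow> 'a"
  join :: "nat \<Rightarrow> 'a \<Rightarrow> 'a \<Rightarrow> 'a"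
  meet :: "nat \<Rightarrow> 'a \<Rightarrow> 'a \<Rightarrow> 'a"
  ex   :: "nat \<Rightarrow> 'a \<Rightarrow> 'a"
  sb   :: "nat \<Rightarrow> nat \<Rightarrow> (nat \<Rightarrow> nat) \<Rightarrow> 'a \<Rightarrow> 'a"

abbreviation substs :: "nat \<Rightarrow> nat \<Rightarrow> (nat \<Rightarrow> nat) set" where
  "substs n k \<equiv> {0..<n} \<rightarrow>\<^sub>E {0..<k}"

definition pe_closed :: "'a pe_alg \<Rightarrow> bool" where
  "pe_closed L \<longleftrightarrow>
     (\<forall>n. bot L n \<in> car L n \<and> top L n \<in> car L n) \<and>
     (\<forall>n. \<forall>x\<in>car L n. \<forall>y\<in>car L n. join L n x y \<in> car L n \<and> meet L n x y \<in> car L n) \<and>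
     (\<forall>n. \<forall>x\<in>car L (Suc n). ex L n x \<in> car L n) \<and>
     (\<forall>n k. \<forall>\<alpha>\<in>substs n k. \<forall>x\<in>car L n. sb L n k \<alpha> x \<in> car L k)"

definition ax1 :: "'a pe_alg \<Rightarrow> bool" where
  "ax1 L \<longleftrightarrow> (\<forall>n. \<forall>x\<in>car L n. \<forall>y\<in>car L n. \<forall>z\<in>car L n.
      join L n (join L n x y) z = join L n x (join L n y z) \<and>
      meet L n (meet L n x y) z = meet L n x (meet L n y z) \<and>
      join L n x y = join L n y x \<and>
      meet L n x y = meet L n y x \<and>
      join L n x (meet L n x y) = x \<and>
      meet L n x (join L n x y) = x \<and>
      meet L n x (join L n y z) = join L n (meet L n x y) (meet L n x z) \<and>
      join L n x (bot L n) = x \<and>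
      meet L n x (top L n) = x)"

definition ax2 :: "'a pe_alg \<Rightarrow> bool" where
  "ax2 L \<longleftrightarrow> (\<forall>n k. \<forall>\<alpha>\<in>substs n k.
      sb L n k \<alpha> (bot L n) = bot L k \<and>
      sb L n k \<alpha> (top L n) = top L k \<and>
      (\<forall>x\<in>car L n. \<forall>y\<in>car L n.
         sb L n k \<alpha> (join L n x y) = join L k (sb L n k \<alpha> x) (sb L n k \<alpha> y) \<and>
         sb L n k \<alpha> (meet L n x y) = meet L k (sb L n k \<alpha> x) (sb L n k \<alpha> y)))"

definition ax3 :: "'a pe_alg \<Rightarrow> bool" where
  "ax3 L \<longleftrightarrow> (\<forall>k n m. \<forall>\<alpha>\<in>substs k n. \<forall>\<beta>\<in>substs n m. \<forall>r\<in>car L k.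
      sb L k m (compose {0..<k} \<beta> \<alpha>) r = sb L n m \<beta> (sb L k n \<alpha> r))"

definition ax4 :: "'a pe_alg \<Rightarrow> bool" where
  "ax4 L \<longleftrightarrow> (\<forall>n. \<forall>r\<in>car L n. sb L n n (restrict id {0..<n}) r = r)"

definition ax8 :: "'a pe_alg \<Rightarrow> bool" where
  "ax8 L \<longleftrightarrow> (\<forall>n. \<forall>r\<in>car L (Suc n).
      r = meet L (Suc n) r (sb L n (Suc n) (restrict id {0..<n}) (ex L n r)))"

text \<open>The positive existential algebra A(W): sort n is the powerset of W^n,
  n-tuples being lists of length n over W.\<close>
definition tuples :: "'w set \<Rightarrow> nat \<Rightarrow> 'w list set" where
  "tuples W n = {xs. length xs = n \<and> set xs \<subseteq> W}"

definition subst_tuple :: "nat \<Rightarrow> (nat \<Rightarrow> nat) \<Rightarrow> 'w list \<Rightarrow> 'w list" where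
  "subst_tuple n \<alpha> xs = map (\<lambda>i. xs ! \<alpha> i) [0..<n]"

definition subst_rel :: "'w set \<Rightarrow> nat \<Rightarrow> nat \<Rightarrow> (nat \<Rightarrow> nat) \<Rightarrow> 'w list set \<Rightarrow> 'w list set" where
  "subst_rel W n k \<alpha> r = {xs \<in> tuples W k. subst_tuple n \<alpha> xs \<in> r}"

definition ex_rel :: "'w set \<Rightarrow> nat \<Rightarrow> 'w list set \<Rightarrow> 'w list set" where
  "ex_rel W n r = {xs \<in> tuples W n. \<exists>y. xs @ [y] \<in> r}"

definition almost_morphism :: "'a pe_alg \<Rightarrow> 'w set \<Rightarrow> (nat \<Rightarrow> 'a \<Rightarrow> 'w list set) \<Rightarrow> bool" where
  "almost_morphism L W \<phi> \<longleftrightarrow>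
     (\<forall>n. \<forall>r\<in>car L n. \<phi> n r \<subseteq> tuples W n) \<and>
     (\<forall>n k. \<forall>\<alpha>\<in>substs n k. \<forall>r\<in>car L n. \<phi> k (sb L n k \<alpha> r) = subst_rel W n k \<alpha> (\<phi> n r)) \<and>
     (\<forall>n. \<phi> n (bot L n) = {} \<and> \<phi> n (top L n) = tuples W n) \<and>
     (\<forall>n. \<forall>r\<in>car L n. \<forall>s\<in>car L n.
        \<phi> n (join L n r s) = \<phi> n r \<union> \<phi> n s \<and> \<phi> n (meet L n r s) = \<phi> n r \<inter> \<phi> n s) \<and>
     (\<forall>n. \<forall>r\<in>car L (Suc n). ex_rel W n (\<phi> (Suc n) r) \<subseteq> \<phi> n (ex L n r))"

end

(* By the prime filter theorem (Zorn's lemma), some prime filter P of sort n contains exactly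
   one of r and s. Take n points as the universe W; a k-tuple of points names a substitution
   k \<rightarrow> n, and it satisfies x iff that substitution carries x into P. Axioms (2) and (3), together
   with P being a lattice homomorphism to bool, make this an interpretation preserving
   substitutions, 0, 1, join and meet; axiom (8) gives the inclusion for \<exists>; and by axiom (4)
   the tuple listing the n points in order satisfies r iff r \<in> P, which separates r from s. *)

theory Submission
  imports Defs
begin

locale distrib_lattice_on =
  fixes C :: "'a set"
    and join :: "'a \<Rightarrow> 'a \<Rightarrow> 'a" (infixl \<open>\<squnion>\<^sub>L\<close> 65)
    and meet :: "'a \<Rightarrow> 'a \<Rightarrow> 'a" (infixl \<open>\<sqinter>\<^sub>L\<close> 70)
    and zero one :: 'a
  assumes zero_closed: "zero \<in> C" and one_closed: "one \<in> C"
    and join_closed: "x \<in> C \<Longrightarrow> y \<in> C \<Longrightarrow> x \<squnion>\<^sub>L y \<in> C"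
    and meet_closed: "x \<in> C \<Longrightarrow> y \<in> C \<Longrightarrow> x \<sqinter>\<^sub>L y \<in> C"
    and meet_assoc: "x \<in> C \<Longrightarrow> y \<in> C \<Longrightarrow> z \<in> C \<Longrightarrow> x \<sqinter>\<^sub>L y \<sqinter>\<^sub>L z = x \<sqinter>\<^sub>L (y \<sqinter>\<^sub>L z)"
    and join_commute: "x \<in> C \<Longrightarrow> y \<in> C \<Longrightarrow> x \<squnion>\<^sub>L y = y \<squnion>\<^sub>L x"
    and meet_commute: "x \<in> C \<Longrightarrow> y \<in> C \<Longrightarrow> x \<sqinter>\<^sub>L y = y \<sqinter>\<^sub>L x"
    and join_absorb: "x \<in> C \<Longrightarrow> y \<in> C \<Longrightarrow> x \<squnion>\<^sub>L x \<sqinter>\<^sub>L y = x"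
    and meet_absorb: "x \<in> C \<Longrightarrow> y \<in> C \<Longrightarrow> x \<sqinter>\<^sub>L (x \<squnion>\<^sub>L y) = x"
    and meet_join_distrib: "x \<in> C \<Longrightarrow> y \<in> C \<Longrightarrow> z \<in> C \<Longrightarrow> x \<sqinter>\<^sub>L (y \<squnion>\<^sub>L z) = x \<sqinter>\<^sub>L y \<squnion>\<^sub>L x \<sqinter>\<^sub>L z"
    and join_zero: "x \<in> C \<Longrightarrow> x \<squnion>\<^sub>L zero = x"
    and meet_one: "x \<in> C \<Longrightarrow> x \<sqinter>\<^sub>L one = x"
begin

definition le :: "'a \<Rightarrow> 'a \<Rightarrow> bool" where
  "le x y \<longleftrightarrow> x = x \<sqinter>\<^sub>L y"

lemma meet_idem: "x \<in> C \<Longrightarrow> x \<sqinter>\<^sub>L x = x"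
  by (metis join_absorb meet_absorb meet_closed)

lemma le_refl: "x \<in> C \<Longrightarrow> le x x"
  by (simp add: le_def meet_idem)

lemma le_trans: "x \<in> C \<Longrightarrow> y \<in> C \<Longrightarrow> z \<in> C \<Longrightarrow> le x y \<Longrightarrow> le y z \<Longrightarrow> le x z"
  unfolding le_def by (metis meet_assoc)

lemma le_antisym: "x \<in> C \<Longrightarrow> y \<in> C \<Longrightarrow> le x y \<Longrightarrow> le y x \<Longrightarrow> x = y"
  unfolding le_def by (metis meet_commute)

lemma meet_le1: "x \<in> C \<Longrightarrow> y \<in> C \<Longrightarrow> le (x \<sqinter>\<^sub>L y) x"
  unfolding le_def by (metis meet_assoc meet_commute meet_idem)

lemma meet_le2: "x \<in> C \<Longrightarrow> y \<in> C \<Longrightarrow> le (x \<sqinter>\<^sub>L y) y"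
  by (metis meet_le1 meet_commute)

lemma le_meetI: "x \<in> C \<Longrightarrow> y \<in> C \<Longrightarrow> z \<in> C \<Longrightarrow> le x y \<Longrightarrow> le x z \<Longrightarrow> le x (y \<sqinter>\<^sub>L z)"
  unfolding le_def by (metis meet_assoc)

lemma meet_mono: "x \<in> C \<Longrightarrow> x' \<in> C \<Longrightarrow> y \<in> C \<Longrightarrow> y' \<in> C \<Longrightarrow> le x x' \<Longrightarrow> le y y'
    \<Longrightarrow> le (x \<sqinter>\<^sub>L y) (x' \<sqinter>\<^sub>L y')"
  by (meson le_meetI le_trans meet_closed meet_le1 meet_le2)

lemma join_ge1: "x \<in> C \<Longrightarrow> y \<in> C \<Longrightarrow> le x (x \<squnion>\<^sub>L y)"
  by (simp add: le_def meet_absorb)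

lemma join_ge2: "x \<in> C \<Longrightarrow> y \<in> C \<Longrightarrow> le y (x \<squnion>\<^sub>L y)"
  by (metis join_commute join_ge1)

lemma join_leI: "x \<in> C \<Longrightarrow> y \<in> C \<Longrightarrow> z \<in> C \<Longrightarrow> le x z \<Longrightarrow> le y z \<Longrightarrow> le (x \<squnion>\<^sub>L y) z"
  unfolding le_def by (metis join_closed meet_commute meet_join_distrib)

lemma zero_le: "x \<in> C \<Longrightarrow> le zero x"
  unfolding le_def by (metis join_commute join_zero meet_absorb zero_closed)

lemma le_one: "x \<in> C \<Longrightarrow> le x one"
  by (simp add: le_def meet_one)

definition filter :: "'a set \<Rightarrow> bool" where
  "filter F \<longleftrightarrow> F \<subseteq> C \<and> (\<forall>x\<in>F. \<forall>y\<in>F. x \<sqinter>\<^sub>L y \<in> F) \<and> (\<forall>x\<in>F. \<forall>y\<in>C. le x y \<longrightarrow> y \<in> F)"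

text \<open>Stated as: the indicator of P is a bounded-lattice homomorphism from C to bool.\<close>
definition prime_filter :: "'a set \<Rightarrow> bool" where
  "prime_filter P \<longleftrightarrow> P \<subseteq> C \<and> one \<in> P \<and> zero \<notin> P \<and>
     (\<forall>x\<in>C. \<forall>y\<in>C. (x \<sqinter>\<^sub>L y \<in> P \<longleftrightarrow> x \<in> P \<and> y \<in> P) \<and> (x \<squnion>\<^sub>L y \<in> P \<longleftrightarrow> x \<in> P \<or> y \<in> P))"

lemma filter_Union_chain:
  assumes "Fs \<noteq> {}" and "\<And>F. F \<in> Fs \<Longrightarrow> filter F" and "subset.chain UNIV Fs"
  shows "filter (\<Union>Fs)"
proof -
  have "x \<sqinter>\<^sub>L y \<in> \<Union>Fs" if xy: "x \<in> \<Union>Fs" "y \<in> \<Union>Fs" for x y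
  proof -
    obtain F G where F: "F \<in> Fs" "x \<in> F" and G: "G \<in> Fs" "y \<in> G" using xy by blast
    with assms(3) have "F \<subseteq> G \<or> G \<subseteq> F"
      unfolding subset.chain_def by blast
    with F G obtain H where "H \<in> Fs" "x \<in> H" "y \<in> H" by blast
    then show ?thesis using assms(2) unfolding filter_def by blast
  qed
  moreover have "\<Union>Fs \<subseteq> C"
    using assms(2) unfolding filter_def by blast
  moreover have "y \<in> \<Union>Fs" if "x \<in> \<Union>Fs" "y \<in> C" "le x y" for x y
    using assms(2) that unfolding filter_def by blast
  ultimately show ?thesis unfolding filter_def by blast
qed

lemma maximal_filter_avoiding:
  assumes "r \<in> C" and "s \<in> C" and "\<not> le r s"
  obtains P where "filter P" "r \<in> P" "s \<notin> P"
    and "\<And>F. filter F \<Longrightarrow> s \<notin> F \<Longrightarrow> P \<subseteq> F \<Longrightarrow> F = P"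
proof -
  define S where "S = {F. filter F \<and> r \<in> F \<and> s \<notin> F}"
  have "{x \<in> C. le r x} \<in> S"
    using assms by (auto simp: S_def filter_def intro: le_refl le_meetI le_trans meet_closed)
  moreover have "\<Union>Fs \<in> S" if "Fs \<noteq> {}" "subset.chain S Fs" for Fs
    using that filter_Union_chain[of Fs] by (auto simp: S_def subset.chain_def)
  ultimately obtain P where "P \<in> S" "\<And>F. F \<in> S \<Longrightarrow> P \<subseteq> F \<Longrightarrow> F = P"
    using subset_Zorn_nonempty[of S] by blast
  then show thesis using that by (auto simp: S_def)
qed

lemma filter_extension:
  assumes "filter P" and "r \<in> P" and "a \<in> C"
  defines "G \<equiv> {x \<in> C. \<exists>f\<in>P. le (f \<sqinter>\<^sub>L a) x}"
  shows "filter G" and "P \<subseteq> G" and "a \<in> G"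
proof -
  have PC: "P \<subseteq> C" using assms(1) by (simp add: filter_def)
  show "P \<subseteq> G"
  proof
    fix f assume "f \<in> P"
    then have "f \<in> C" "le (f \<sqinter>\<^sub>L a) f" using PC assms(3) meet_le1 by auto
    with \<open>f \<in> P\<close> show "f \<in> G" by (auto simp: G_def)
  qed
  have "le (r \<sqinter>\<^sub>L a) a" using PC assms(2,3) meet_le2 by auto
  with assms(2,3) show "a \<in> G" by (auto simp: G_def)
  have "x \<sqinter>\<^sub>L y \<in> G" if xy: "x \<in> G" "y \<in> G" for x y
  proof -
    obtain f g where x: "x \<in> C" "f \<in> P" "le (f \<sqinter>\<^sub>L a) x" and y: "y \<in> C" "g \<in> P" "le (g \<sqinter>\<^sub>L a) y"
      using xy by (auto simp: G_def)
    have fg: "f \<in> C" "g \<in> C" "f \<sqinter>\<^sub>L g \<in> P"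
      using x y PC assms(1) by (auto simp: filter_def)
    have "le (f \<sqinter>\<^sub>L g \<sqinter>\<^sub>L a) (f \<sqinter>\<^sub>L a)" "le (f \<sqinter>\<^sub>L g \<sqinter>\<^sub>L a) (g \<sqinter>\<^sub>L a)"
      using meet_mono[OF meet_closed[OF fg(1,2)] fg(1) assms(3,3) meet_le1[OF fg(1,2)] le_refl[OF assms(3)]]
        meet_mono[OF meet_closed[OF fg(1,2)] fg(2) assms(3,3) meet_le2[OF fg(1,2)] le_refl[OF assms(3)]]
      by auto
    then have "le (f \<sqinter>\<^sub>L g \<sqinter>\<^sub>L a) x" "le (f \<sqinter>\<^sub>L g \<sqinter>\<^sub>L a) y"
      using le_trans x y fg assms(3) meet_closed by metis+
    then have "le (f \<sqinter>\<^sub>L g \<sqinter>\<^sub>L a) (x \<sqinter>\<^sub>L y)"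
      using le_meetI x(1) y(1) fg assms(3) meet_closed by metis
    then show ?thesis using x y fg by (auto simp: G_def intro: meet_closed)
  qed
  moreover have "y \<in> G" if xy: "x \<in> G" "y \<in> C" "le x y" for x y
  proof -
    obtain f where "x \<in> C" "f \<in> P" "le (f \<sqinter>\<^sub>L a) x" using xy(1) by (auto simp: G_def)
    moreover have "f \<sqinter>\<^sub>L a \<in> C" using calculation(2) PC assms(3) meet_closed by blast
    ultimately show ?thesis using xy(2,3) le_trans unfolding G_def by blast
  qed
  moreover have "G \<subseteq> C" by (auto simp: G_def)
  ultimately show "filter G"
    unfolding filter_def by blast
qed

lemma maximal_filter_join_prime:
  assumes P: "filter P" "r \<in> P" "s \<in> C" "s \<notin> P"
    and maximal: "\<And>F. filter F \<Longrightarrow> s \<notin> F \<Longrightarrow> P \<subseteq> F \<Longrightarrow> F = P"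
    and xy: "x \<in> C" "y \<in> C" "x \<squnion>\<^sub>L y \<in> P"
  shows "x \<in> P \<or> y \<in> P"
proof (rule ccontr)
  have PC: "P \<subseteq> C" using P by (simp add: filter_def)
  have below_s: "\<exists>f\<in>P. le (f \<sqinter>\<^sub>L a) s" if "a \<in> C" "a \<notin> P" for a
  proof -
    \<comment> \<open>The filter generated by P and a is strictly larger than P, so by maximality it contains s.\<close>
    note G = filter_extension[OF P(1,2) \<open>a \<in> C\<close>]
    have "s \<in> {x \<in> C. \<exists>f\<in>P. le (f \<sqinter>\<^sub>L a) x}"
      using maximal[OF G(1) _ G(2)] G(3) that(2) by blast
    then show ?thesis by blast
  qed
  assume "\<not> (x \<in> P \<or> y \<in> P)"
  then obtain f g where f: "f \<in> P" "le (f \<sqinter>\<^sub>L x) s" and g: "g \<in> P" "le (g \<sqinter>\<^sub>L y) s"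
    using below_s xy by blast
  define h where "h = f \<sqinter>\<^sub>L g"
  have h: "h \<in> P" "h \<in> C" "f \<in> C" "g \<in> C"
    using P(1) PC f g by (auto simp: filter_def h_def)
  have "le (h \<sqinter>\<^sub>L x) (f \<sqinter>\<^sub>L x)" "le (h \<sqinter>\<^sub>L y) (g \<sqinter>\<^sub>L y)"
    using h xy unfolding h_def by (auto intro: meet_mono meet_le1 meet_le2 le_refl)
  then have "le (h \<sqinter>\<^sub>L x) s" "le (h \<sqinter>\<^sub>L y) s"
    using f(2) g(2) h xy P(3) le_trans meet_closed by metis+
  then have "le (h \<sqinter>\<^sub>L (x \<squnion>\<^sub>L y)) s"
    using h xy P(3) by (simp add: meet_join_distrib join_leI meet_closed)
  moreover have "h \<sqinter>\<^sub>L (x \<squnion>\<^sub>L y) \<in> P"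
    using P(1) h xy by (simp add: filter_def)
  ultimately show False
    using P(1,3,4) by (simp add: filter_def)
qed

lemma prime_filter_exists:
  assumes "r \<in> C" and "s \<in> C" and "\<not> le r s"
  obtains P where "prime_filter P" "r \<in> P" "s \<notin> P"
proof -
  obtain P where P: "filter P" "r \<in> P" "s \<notin> P"
    and maximal: "\<And>F. filter F \<Longrightarrow> s \<notin> F \<Longrightarrow> P \<subseteq> F \<Longrightarrow> F = P"
    using maximal_filter_avoiding[OF assms] by blast
  have PC: "P \<subseteq> C" and up: "\<And>x y. x \<in> P \<Longrightarrow> y \<in> C \<Longrightarrow> le x y \<Longrightarrow> y \<in> P"
    and meet_mem: "\<And>x y. x \<in> P \<Longrightarrow> y \<in> P \<Longrightarrow> x \<sqinter>\<^sub>L y \<in> P"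
    using P(1) unfolding filter_def by auto
  have "one \<in> P"
    using up[OF P(2) one_closed le_one[OF assms(1)]] .
  moreover have "zero \<notin> P"
    using up[OF _ assms(2) zero_le[OF assms(2)]] P(3) by blast
  moreover have "x \<sqinter>\<^sub>L y \<in> P \<longleftrightarrow> x \<in> P \<and> y \<in> P" if "x \<in> C" "y \<in> C" for x y
    using meet_mem up[OF _ that(1) meet_le1[OF that]] up[OF _ that(2) meet_le2[OF that]] by blast
  moreover have "x \<squnion>\<^sub>L y \<in> P \<longleftrightarrow> x \<in> P \<or> y \<in> P" if "x \<in> C" "y \<in> C" for x y
    using maximal_filter_join_prime[OF P(1,2) assms(2) P(3) _ that] maximal
      up[OF _ join_closed[OF that] join_ge1[OF that]] up[OF _ join_closed[OF that] join_ge2[OF that]]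
    by blast
  ultimately have "prime_filter P"
    using PC by (simp add: prime_filter_def)
  then show thesis using that P(2,3) by blast
qed

lemma prime_filter_separates:
  assumes "x \<in> C" and "y \<in> C" and "x \<noteq> y"
  obtains P where "prime_filter P" and "x \<in> P \<longleftrightarrow> y \<notin> P"
proof (cases "le x y")
  case True
  with assms have "\<not> le y x" using le_antisym by blast
  then obtain P where "prime_filter P" "y \<in> P" "x \<notin> P"
    using prime_filter_exists[OF assms(2,1)] by blast
  then show thesis using that by blast
next
  case False
  then obtain P where "prime_filter P" "x \<in> P" "y \<notin> P"
    using prime_filter_exists[OF assms(1,2)] by blast
  then show thesis using that by blast
qed

end

lemma pe_closed_sb: "pe_closed L \<Longrightarrow> \<alpha> \<in> substs k k' \<Longrightarrow> x \<in> car L k \<Longrightarrow> sb L k k' \<alpha> x \<in> car L k'"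
  unfolding pe_closed_def by blast

lemma pe_closed_ex: "pe_closed L \<Longrightarrow> x \<in> car L (Suc k) \<Longrightarrow> ex L k x \<in> car L k"
  unfolding pe_closed_def by blast

lemma sort_distrib_lattice:
  assumes "pe_closed L" and "ax1 L"
  shows "distrib_lattice_on (car L n) (join L n) (meet L n) (pe_alg.bot L n) (pe_alg.top L n)"
  using assms unfolding pe_closed_def ax1_def by unfold_locales blast+

abbreviation sort_prime_filter :: "'a pe_alg \<Rightarrow> nat \<Rightarrow> 'a set \<Rightarrow> bool" where
  "sort_prime_filter L n \<equiv>
     distrib_lattice_on.prime_filter (car L n) (join L n) (meet L n) (pe_alg.bot L n) (pe_alg.top L n)"

definition index_subst :: "('w \<Rightarrow> nat) \<Rightarrow> nat \<Rightarrow> 'w list \<Rightarrow> nat \<Rightarrow> nat" where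
  "index_subst d k xs = restrict (\<lambda>i. d (xs ! i)) {0..<k}"

lemma index_subst_in_substs:
  assumes "d \<in> W \<rightarrow> {0..<n}" and "xs \<in> tuples W k"
  shows "index_subst d k xs \<in> substs k n"
  using assms by (force simp: index_subst_def tuples_def)

lemma subst_tuple_in_tuples:
  "\<alpha> \<in> substs k k' \<Longrightarrow> xs \<in> tuples W k' \<Longrightarrow> subst_tuple k \<alpha> xs \<in> tuples W k"
  by (auto simp: tuples_def subst_tuple_def PiE_iff)

lemma index_subst_subst_tuple:
  "\<alpha> \<in> substs k k' \<Longrightarrow> index_subst d k (subst_tuple k \<alpha> xs) = compose {0..<k} (index_subst d k' xs) \<alpha>"
  by (auto simp: index_subst_def compose_def subst_tuple_def PiE_iff)

lemma subst_tuple_snoc: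
  "length xs = k \<Longrightarrow> subst_tuple k (restrict id {0..<k}) (xs @ [y]) = xs"
  by (auto simp: subst_tuple_def nth_append intro: nth_equalityI)

locale prime_filter_model =
  fixes L :: "'a pe_alg" and n :: nat and P :: "'a set" and W :: "'w set" and d :: "'w \<Rightarrow> nat"
  assumes closed: "pe_closed L" and ax1: "ax1 L" and ax2: "ax2 L" and ax3: "ax3 L" and ax8: "ax8 L"
    and prime_filter: "sort_prime_filter L n P"
    and index_range: "d \<in> W \<rightarrow> {0..<n}"
begin

text \<open>A point w of W stands for the variable d w of sort n, so a k-tuple of points is a
  substitution k \<rightarrow> n; it satisfies x when that substitution carries x into P.\<close>
definition model :: "nat \<Rightarrow> 'a \<Rightarrow> 'w list set" where
  "model k x = {xs \<in> tuples W k. sb L k n (index_subst d k xs) x \<in> P}"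

lemma top_in_P: "pe_alg.top L n \<in> P"
  and bot_notin_P: "pe_alg.bot L n \<notin> P"
  and meet_in_P_iff: "x \<in> car L n \<Longrightarrow> y \<in> car L n \<Longrightarrow> meet L n x y \<in> P \<longleftrightarrow> x \<in> P \<and> y \<in> P"
  and join_in_P_iff: "x \<in> car L n \<Longrightarrow> y \<in> car L n \<Longrightarrow> join L n x y \<in> P \<longleftrightarrow> x \<in> P \<or> y \<in> P"
  using prime_filter unfolding distrib_lattice_on.prime_filter_def[OF sort_distrib_lattice[OF closed ax1]]
  by blast+

lemma model_subset_tuples: "model k x \<subseteq> tuples W k"
  by (auto simp: model_def)

lemma model_sb:
  assumes \<alpha>: "\<alpha> \<in> substs k k'" and x: "x \<in> car L k"
  shows "model k' (sb L k k' \<alpha> x) = subst_rel W k k' \<alpha> (model k x)"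
proof -
  have "sb L k' n (index_subst d k' xs) (sb L k k' \<alpha> x) = sb L k n (index_subst d k (subst_tuple k \<alpha> xs)) x"
    if "xs \<in> tuples W k'" for xs
    using ax3[unfolded ax3_def, rule_format, OF \<alpha> index_subst_in_substs[OF index_range that] x]
    unfolding index_subst_subst_tuple[OF \<alpha>] by simp
  then show ?thesis
    using subst_tuple_in_tuples[OF \<alpha>] by (auto simp: model_def subst_rel_def)
qed

lemma
  assumes "x \<in> car L k" and "y \<in> car L k"
  shows model_join: "model k (join L k x y) = model k x \<union> model k y"
    and model_meet: "model k (meet L k x y) = model k x \<inter> model k y"
proof -
  have "sb L k n \<iota> (join L k x y) = join L n (sb L k n \<iota> x) (sb L k n \<iota> y)"
    and "sb L k n \<iota> (meet L k x y) = meet L n (sb L k n \<iota> x) (sb L k n \<iota> y)"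
    and "sb L k n \<iota> x \<in> car L n" and "sb L k n \<iota> y \<in> car L n"
    if "\<iota> \<in> substs k n" for \<iota>
    using ax2 closed assms that unfolding ax2_def pe_closed_def by blast+
  then show "model k (join L k x y) = model k x \<union> model k y"
    and "model k (meet L k x y) = model k x \<inter> model k y"
    using meet_in_P_iff join_in_P_iff index_subst_in_substs[OF index_range] by (auto simp: model_def)
qed

lemma model_bot: "model k (pe_alg.bot L k) = {}"
  and model_top: "model k (pe_alg.top L k) = tuples W k"
  using ax2 top_in_P bot_notin_P index_subst_in_substs[OF index_range]
  unfolding model_def ax2_def by auto

lemma model_ex:
  assumes x: "x \<in> car L (Suc k)"
  shows "ex_rel W k (model (Suc k) x) \<subseteq> model k (ex L k x)"
proof
  fix xs assume "xs \<in> ex_rel W k (model (Suc k) x)"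
  then obtain y where xs: "xs \<in> tuples W k" and y: "xs @ [y] \<in> model (Suc k) x"
    by (auto simp: ex_rel_def)
  define c where "c = restrict id {0..<k}"
  have c: "c \<in> substs k (Suc k)" by (auto simp: c_def)
  have ex: "ex L k x \<in> car L k" using pe_closed_ex[OF closed x] .
  \<comment> \<open>Axiom (8) says x \<le> c(\<exists>x); the model turns \<le> into \<subseteq>.\<close>
  have "x = meet L (Suc k) x (sb L k (Suc k) c (ex L k x))"
    using ax8 x unfolding ax8_def c_def by blast
  then have "model (Suc k) x = model (Suc k) (meet L (Suc k) x (sb L k (Suc k) c (ex L k x)))"
    by (rule arg_cong)
  also have "\<dots> = model (Suc k) x \<inter> model (Suc k) (sb L k (Suc k) c (ex L k x))"
    using model_meet[OF x pe_closed_sb[OF closed c ex]] .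
  finally have "xs @ [y] \<in> subst_rel W k (Suc k) c (model k (ex L k x))"
    using y model_sb[OF c ex] by blast
  moreover have "subst_tuple k c (xs @ [y]) = xs"
    using xs by (simp add: c_def tuples_def subst_tuple_snoc)
  ultimately show "xs \<in> model k (ex L k x)" by (simp add: subst_rel_def)
qed

theorem almost_morphism_model: "almost_morphism L W model"
  unfolding almost_morphism_def
  using model_subset_tuples model_sb model_join model_meet model_bot model_top model_ex by auto

lemma model_separates:
  assumes ax4: "ax4 L" and ws: "ws \<in> tuples W n" "index_subst d n ws = restrict id {0..<n}"
    and x: "x \<in> car L n" and y: "y \<in> car L n" and "x \<in> P \<longleftrightarrow> y \<notin> P"
  shows "model n x \<noteq> model n y"
proof -
  have "ws \<in> model n z \<longleftrightarrow> z \<in> P" if "z \<in> car L n" for z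
    using ax4 ws that unfolding ax4_def model_def by auto
  then show ?thesis using x y assms(6) by blast
qed

end

lemma separating_almost_morphism:
  fixes L :: "'a pe_alg" and e :: "nat \<Rightarrow> 'w"
  assumes "pe_closed L" and "ax1 L" and "ax2 L" and "ax3 L" and "ax4 L" and "ax8 L"
    and "r \<in> car L n" and "s \<in> car L n" and "r \<noteq> s" and "inj e"
  shows "\<exists>(W :: 'w set) \<phi>. almost_morphism L W \<phi> \<and> \<phi> n r \<noteq> \<phi> n s"
proof -
  interpret distrib_lattice_on "car L n" "join L n" "meet L n" "pe_alg.bot L n" "pe_alg.top L n"
    using sort_distrib_lattice[OF assms(1,2)] .
  obtain P where P: "prime_filter P" "r \<in> P \<longleftrightarrow> s \<notin> P"
    using prime_filter_separates[OF assms(7-9)] .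
  interpret M: prime_filter_model L n P "e ` {0..<n}" "inv e"
    by unfold_locales (use assms P(1) in \<open>auto simp: inv_f_f\<close>)
  let ?ws = "map e [0..<n]"
  have "?ws \<in> tuples (e ` {0..<n}) n" by (auto simp: tuples_def)
  moreover have "index_subst (inv e) n ?ws = restrict id {0..<n}"
    using assms(10) by (auto simp: index_subst_def inv_f_f)
  ultimately have "M.model n r \<noteq> M.model n s"
    using M.model_separates[OF assms(5) _ _ assms(7,8) P(2)] by blast
  then show ?thesis using M.almost_morphism_model by blast
qed

theorem lemma4p9:
  fixes L :: "'a pe_alg" and n :: nat and r s :: 'a
  assumes "pe_closed L" and "ax1 L" and "ax2 L" and "ax3 L" and "ax4 L" and "ax8 L"
    and "r \<in> car L n" and "s \<in> car L n" and "r \<noteq> s"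
  shows "\<exists>(W :: (nat \<times> 'a) set set) (\<phi> :: nat \<Rightarrow> 'a \<Rightarrow> (nat \<times> 'a) set list set).
           almost_morphism L W \<phi> \<and> \<phi> n r \<noteq> \<phi> n s"
proof -
  \<comment> \<open>Any injection of the indices into the prescribed point type will do.\<close>
  have "inj (\<lambda>i::nat. {i} \<times> (UNIV :: 'a set))"
    by (auto simp: inj_def)
  then show ?thesis
    using separating_almost_morphism[OF assms] by blast
qed

end
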